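(* Let $\hat{L}$ be a virtual link diagram with $n$ classical crossings. Then there is a realization $L$ of $\hat{L}$ such that $uf(L) \le n$, and the crossing changes realizing $uf(L)$ can all be taken at crossings of $L$ that come from classical crossings of $\hat{L}$.
   Context: A virtual link diagram is an immersion of finitely many copies of $S^1$ in the plane whose double points are either classical crossings (with over/under information) or virtual crossings (without over/under information). A realization of a virtual link diagram is the classical link diagram obtained by choosing an over/under marking at each virtual crossing (so a diagram with $m$ virtual crossings has $2^m$ realizations). For a fixed classical link diagram $L$, the fixed unknotting number $uf(L)$ is the minimum number of crossing changes in the diagram $L$ needed to turn it into a diagram of the unlink (the trivial link with the same number of components). *)

theory Defs
  imports "HOL-Analysis.Analysis"
begin

text \<open>
  Plane = complex, space = complex \<times> real.
  A (virtual or classical) link diagram with k components is given by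
  c :: nat \<Rightarrow> real \<Rightarrow> complex, where c i (i < k) is a 1-periodic
  C^1 immersion (nonvanishing derivative), i.e. an immersed circle.
  Points of the disjoint union of circles are pairs (i,t) with i < k, 0 \<le> t < 1.
\<close>

definition preim :: "nat \<Rightarrow> (nat \<Rightarrow> real \<Rightarrow> complex) \<Rightarrow> complex \<Rightarrow> (nat \<times> real) set" where
  "preim k c p = {(i, t). i < k \<and> 0 \<le> t \<and> t < 1 \<and> c i t = p}"

definition dpoints :: "nat \<Rightarrow> (nat \<Rightarrow> real \<Rightarrow> complex) \<Rightarrow> complex set" where
  "dpoints k c = {p. card (preim k c p) = 2}"

text \<open>Generic immersion of finitely many circles in the plane: only transverse
  double points, finitely many of them, no triple points.\<close>
definition generic_immersion :: "nat \<Rightarrow> (nat \<Rightarrow> real \<Rightarrow> complex) \<Rightarrow> bool" where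
  "generic_immersion k c \<longleftrightarrow>
     (\<forall>i<k. (\<forall>t. c i (t + 1) = c i t)
        \<and> (\<forall>t. c i differentiable (at t))
        \<and> continuous_on UNIV (\<lambda>t. vector_derivative (c i) (at t))
        \<and> (\<forall>t. vector_derivative (c i) (at t) \<noteq> 0))
   \<and> (\<forall>p. finite (preim k c p) \<and> card (preim k c p) \<le> 2)
   \<and> finite (dpoints k c)
   \<and> (\<forall>p \<in> dpoints k c. \<forall>i s j t. (i, s) \<in> preim k c p \<and> (j, t) \<in> preim k c p
          \<and> (i, s) \<noteq> (j, t) \<longrightarrow>
          Im (cnj (vector_derivative (c i) (at s)) * vector_derivative (c j) (at t)) \<noteq> 0)"

text \<open>Virtual link diagram: generic immersion, a set cls of classical crossings
  (the other double points are virtual), and for each classical crossing p the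
  preimage ov p of p that is the over-strand.\<close>
definition virtual_diagram ::
  "nat \<Rightarrow> (nat \<Rightarrow> real \<Rightarrow> complex) \<Rightarrow> complex set \<Rightarrow> (complex \<Rightarrow> nat \<times> real) \<Rightarrow> bool" where
  "virtual_diagram k c cls ov \<longleftrightarrow> generic_immersion k c \<and> cls \<subseteq> dpoints k c
     \<and> (\<forall>p \<in> cls. ov p \<in> preim k c p)"

definition classical_diagram ::
  "nat \<Rightarrow> (nat \<Rightarrow> real \<Rightarrow> complex) \<Rightarrow> (complex \<Rightarrow> nat \<times> real) \<Rightarrow> bool" where
  "classical_diagram k c ov \<longleftrightarrow> virtual_diagram k c (dpoints k c) ov"

definition realization ::
  "nat \<Rightarrow> (nat \<Rightarrow> real \<Rightarrow> complex) \<Rightarrow> complex set \<Rightarrow> (complex \<Rightarrow> nat \<times> real)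
    \<Rightarrow> (complex \<Rightarrow> nat \<times> real) \<Rightarrow> bool" where
  "realization k c cls ov ov' \<longleftrightarrow> classical_diagram k c ov' \<and> (\<forall>p \<in> cls. ov' p = ov p)"

definition cross_change ::
  "nat \<Rightarrow> (nat \<Rightarrow> real \<Rightarrow> complex) \<Rightarrow> (complex \<Rightarrow> nat \<times> real) \<Rightarrow> complex set
    \<Rightarrow> complex \<Rightarrow> nat \<times> real" where
  "cross_change k c ov S p = (if p \<in> S then the_elem (preim k c p - {ov p}) else ov p)"

text \<open>Lifts of a classical diagram to space: continuous periodic heights such that the
  over-strand is higher at every crossing.\<close>
definition admissible_heights ::
  "nat \<Rightarrow> (nat \<Rightarrow> real \<Rightarrow> complex) \<Rightarrow> (complex \<Rightarrow> nat \<times> real) \<Rightarrow> (nat \<Rightarrow> real \<Rightarrow> real) \<Rightarrow> bool" where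
  "admissible_heights k c ov h \<longleftrightarrow>
     (\<forall>i<k. continuous_on UNIV (h i) \<and> (\<forall>t. h i (t + 1) = h i t))
   \<and> (\<forall>p \<in> dpoints k c. \<forall>j t. (j, t) \<in> preim k c p \<and> (j, t) \<noteq> ov p
          \<longrightarrow> h (fst (ov p)) (snd (ov p)) > h j t)"

definition space_link :: "nat \<Rightarrow> (nat \<Rightarrow> real \<Rightarrow> complex) \<Rightarrow> (nat \<Rightarrow> real \<Rightarrow> real) \<Rightarrow> (complex \<times> real) set" where
  "space_link k c h = {(c i t, h i t) | i t. i < k \<and> 0 \<le> t \<and> t \<le> 1}"

definition std_unlink :: "nat \<Rightarrow> (complex \<times> real) set" where
  "std_unlink k = {(of_nat (3 * i) + cis (2 * pi * t), 0) | i t. i < k \<and> 0 \<le> t \<and> t \<le> 1}"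

definition ambient_isotopic :: "(complex \<times> real) set \<Rightarrow> (complex \<times> real) set \<Rightarrow> bool" where
  "ambient_isotopic A B \<longleftrightarrow>
     (\<exists>H :: real \<Rightarrow> complex \<times> real \<Rightarrow> complex \<times> real.
        continuous_on ({0..1} \<times> UNIV) (\<lambda>(s, x). H s x)
      \<and> (\<forall>s \<in> {0..1}. \<exists>g. homeomorphism UNIV UNIV (H s) g)
      \<and> H 0 = id \<and> H 1 ` A = B)"

definition unlink_diagram :: "nat \<Rightarrow> (nat \<Rightarrow> real \<Rightarrow> complex) \<Rightarrow> (complex \<Rightarrow> nat \<times> real) \<Rightarrow> bool" where
  "unlink_diagram k c ov \<longleftrightarrow>
     (\<exists>h. admissible_heights k c ov h \<and> ambient_isotopic (space_link k c h) (std_unlink k))"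

definition uf :: "nat \<Rightarrow> (nat \<Rightarrow> real \<Rightarrow> complex) \<Rightarrow> (complex \<Rightarrow> nat \<times> real) \<Rightarrow> nat" where
  "uf k c ov = (LEAST m. \<exists>S. S \<subseteq> dpoints k c \<and> card S = m \<and> unlink_diagram k c (cross_change k c ov S))"

end

theory Submission
  imports Defs
begin

(*
  Every generic immersion underlies a diagram of the unlink. Pick a base parameter b and lift
  component i to the height -4i + cos (2 pi (t - b)): the components lie in disjoint height
  bands, and each one descends from c i b to c i (b + 1/2) and climbs back. For generic b the
  two strands at every crossing get different heights, which determines the over-strands.
  At height y the lifted component i consists of the two points c i (b - u) and c i (b + u)
  with cos (2 pi u) = y + 4i; a complex affine map of the horizontal plane, depending
  continuously on y, moves them to 3i + sin (2 pi u) and 3i - sin (2 pi u). This straightens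
  component i into a round circle in a vertical plane, and a vertical shear followed by a
  quarter turn lays the circles flat.

  Give the virtual crossings of the given diagram the over/under information of this unlink
  diagram: the resulting realization is unknotted by changes at classical crossings only. Among
  all realizations with this property take one of minimal uf; the non-classical crossings of
  an optimal unknotting set can be changed in the realization itself without increasing uf,
  so by minimality an optimal unknotting set consists of classical crossings.
*)

lemma periodic_add_of_int:
  fixes g :: "real \<Rightarrow> 'a"
  assumes "\<And>t. g (t + 1) = g t"
  shows "g (t + of_int n) = g t"
proof -
  interpret periodic_fun_simple' g by standard (rule assms)
  show ?thesis by (rule plus_of_int)
qed

lemma cos_two_pi_eq_cases:
  fixes x y :: real
  assumes "cos (2 * pi * x) = cos (2 * pi * y)"
  obtains n :: int where "x = y + of_int n" | n :: int where "x = - y + of_int n"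
proof -
  obtain m where m: "m \<in> \<int>" "2 * pi * x = 2 * pi * y + 2 * m * pi \<or> 2 * pi * x = - (2 * pi * y) + 2 * m * pi"
    using assms unfolding cos_eq by blast
  then obtain n :: int where "m = of_int n" using Ints_cases by blast
  with m(2) have "2 * pi * (x - (y + of_int n)) = 0 \<or> 2 * pi * (x - (- y + of_int n)) = 0"
    by (auto simp: algebra_simps)
  then show thesis using that by auto
qed

lemma sin_two_pi_pos: "0 < u \<Longrightarrow> u < 1/2 \<Longrightarrow> 0 < sin (2 * pi * u)"
  by (intro sin_gt_zero) auto

lemma sin_two_pi_add_of_int: "sin (2 * pi * (x + of_int n)) = sin (2 * pi * x)"
  by (simp add: distrib_left sin_add)

lemma cis_two_pi_add_of_int: "cis (2 * pi * (x + of_int n)) = cis (2 * pi * x)"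
  by (simp add: distrib_left cis_mult[symmetric])

lemma continuous_on_compose_UNIV:
  assumes "continuous_on UNIV F" "continuous_on S f"
  shows "continuous_on S (\<lambda>x. F (f x))"
  using continuous_on_compose2[OF assms] by auto

lemma tendsto_quotient_of_has_vector_derivative:
  fixes F :: "real \<Rightarrow> complex"
  assumes "(F has_vector_derivative D) (at 0)" "F 0 = 0"
  shows "((\<lambda>h. F h / of_real h) \<longlongrightarrow> D) (at 0)"
proof -
  have "((\<lambda>x. Re (F x)) has_field_derivative Re D) (at 0)"
    and "((\<lambda>x. Im (F x)) has_field_derivative Im D) (at 0)"
    using assms(1) has_vector_derivative_complex_iff by auto
  then have "((\<lambda>h. Re (F h) / h) \<longlongrightarrow> Re D) (at 0)" "((\<lambda>h. Im (F h) / h) \<longlongrightarrow> Im D) (at 0)"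
    using assms(2) unfolding DERIV_def by simp_all
  moreover have "Im (z / of_real r) = Im z / r" for z r
    by (simp add: Im_divide of_real_def power2_eq_square)
  ultimately show ?thesis unfolding tendsto_complex_iff by simp
qed

lemma tendsto_symmetric_chord_quotient:
  fixes g :: "real \<Rightarrow> complex"
  assumes "(g has_vector_derivative d) (at x)"
  shows "((\<lambda>v. (g (x - v) - g (x + v)) / of_real (sin (2 * pi * v))) \<longlongrightarrow> - d / of_real pi) (at 0)"
proof -
  have "((\<lambda>v. x + v) has_vector_derivative 1) (at 0)" "((\<lambda>v. x - v) has_vector_derivative - 1) (at 0)"
    unfolding has_vector_derivative_def by (auto intro!: derivative_eq_intros)
  from this[THEN vector_diff_chain_at] assms
  have "((\<lambda>v. g (x + v)) has_vector_derivative d) (at 0)"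
    and "((\<lambda>v. g (x - v)) has_vector_derivative - d) (at 0)"
    by (simp_all add: o_def)
  then have "((\<lambda>v. g (x - v) - g (x + v)) has_vector_derivative - 2 * d) (at 0)"
    using has_vector_derivative_diff by fastforce
  then have chord: "((\<lambda>h. (g (x - h) - g (x + h)) / of_real h) \<longlongrightarrow> - 2 * d) (at 0)"
    using tendsto_quotient_of_has_vector_derivative[of "\<lambda>v. g (x - v) - g (x + v)"] by simp
  have "((\<lambda>v. sin (2 * pi * v)) has_field_derivative (2 * pi)) (at 0)"
    by (auto intro!: derivative_eq_intros)
  then have "((\<lambda>h. complex_of_real (sin (2 * pi * h) / h)) \<longlongrightarrow> complex_of_real (2 * pi)) (at 0)"
    unfolding DERIV_def by (intro tendsto_of_real) simp
  from tendsto_divide[OF chord this]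
  have "((\<lambda>h. (g (x - h) - g (x + h)) / of_real h / complex_of_real (sin (2 * pi * h) / h))
          \<longlongrightarrow> - d / of_real pi) (at 0)"
    by simp
  moreover have "\<forall>\<^sub>F h in at 0. (g (x - h) - g (x + h)) / of_real h / complex_of_real (sin (2 * pi * h) / h)
      = (g (x - h) - g (x + h)) / of_real (sin (2 * pi * h))"
    unfolding eventually_at by (rule exI[of _ 1]) auto
  ultimately show ?thesis using Lim_transform_eventually by fastforce
qed

section \<open>The normalized chord of a periodic curve\<close>

text \<open>The values at \<open>u = 0\<close> and \<open>u = 1/2\<close> are the limits of the quotient when \<open>g\<close> is
  1-periodic with derivative \<open>g'\<close>.\<close>

definition chord_quotient :: "(real \<Rightarrow> complex) \<Rightarrow> (real \<Rightarrow> complex) \<Rightarrow> real \<Rightarrow> real \<Rightarrow> complex" where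
  "chord_quotient g g' b u =
     (if u = 0 then - g' b / of_real pi
      else if u = 1/2 then g' (b + 1/2) / of_real pi
      else (g (b - u) - g (b + u)) / of_real (sin (2 * pi * u)))"

lemma continuous_within_chord_quotient_0:
  fixes g :: "real \<Rightarrow> complex"
  assumes "(g has_vector_derivative g' b) (at b)"
  shows "continuous (at 0 within {0..1/2}) (chord_quotient g g' b)"
proof -
  have "((\<lambda>u. (g (b - u) - g (b + u)) / of_real (sin (2 * pi * u))) \<longlongrightarrow> chord_quotient g g' b 0)
          (at 0 within {0..1/2})"
    using tendsto_within_subset[OF tendsto_symmetric_chord_quotient[OF assms] subset_UNIV]
    by (simp add: chord_quotient_def)
  moreover have "\<forall>\<^sub>F u in at 0 within {0..1/2}.
      (g (b - u) - g (b + u)) / of_real (sin (2 * pi * u)) = chord_quotient g g' b u"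
    unfolding eventually_at by (rule exI[of _ "1/2"]) (auto simp: chord_quotient_def)
  ultimately show ?thesis
    unfolding continuous_within by (rule Lim_transform_eventually)
qed

lemma continuous_within_chord_quotient_half:
  fixes g :: "real \<Rightarrow> complex"
  assumes per: "\<And>t. g (t + 1) = g t" and der: "(g has_vector_derivative g' (b + 1/2)) (at (b + 1/2))"
  shows "continuous (at (1/2) within {0..1/2}) (chord_quotient g g' b)"
proof -
  (* by periodicity, the quotient at u is minus the quotient at 1/2 - u around b + 1/2 *)
  define m where "m = b + 1/2"
  have "filterlim (\<lambda>u::real. 1/2 - u) (at 0) (at (1/2) within {0..1/2})"
  proof (rule filterlim_atI)
    show "((\<lambda>u. 1/2 - u) \<longlongrightarrow> (0::real)) (at (1/2) within {0..1/2})"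
      by (auto intro!: tendsto_eq_intros)
    show "\<forall>\<^sub>F u in at (1/2) within {0..1/2}. 1/2 - u \<noteq> (0::real)"
      unfolding eventually_at by (rule exI[of _ 1]) auto
  qed
  from filterlim_compose[OF tendsto_minus[OF tendsto_symmetric_chord_quotient[OF der[folded m_def]]] this]
  have "((\<lambda>u. - ((g (m - (1/2 - u)) - g (m + (1/2 - u))) / of_real (sin (2 * pi * (1/2 - u)))))
          \<longlongrightarrow> chord_quotient g g' b (1/2)) (at (1/2) within {0..1/2})"
    by (simp add: chord_quotient_def m_def)
  moreover have "\<forall>\<^sub>F u in at (1/2) within {0..1/2}.
      - ((g (m - (1/2 - u)) - g (m + (1/2 - u))) / of_real (sin (2 * pi * (1/2 - u))))
        = chord_quotient g g' b u"
    unfolding eventually_at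
  proof (rule exI[of _ "1/2"], safe)
    fix u :: real assume u: "u \<in> {0..1/2}" "u \<noteq> 1/2" "dist u (1/2) < 1/2"
    then have "u \<noteq> 0" by (auto simp: dist_real_def)
    moreover have "g (m + (1/2 - u)) = g (b - u)"
      using per[of "b - u"] by (simp add: m_def algebra_simps)
    moreover have "sin (2 * pi * (1/2 - u)) = sin (2 * pi * u)"
      by (simp add: right_diff_distrib)
    ultimately show "- ((g (m - (1/2 - u)) - g (m + (1/2 - u))) / of_real (sin (2 * pi * (1/2 - u))))
        = chord_quotient g g' b u"
      using u by (simp add: chord_quotient_def m_def algebra_simps minus_divide_left)
  qed simp
  ultimately show ?thesis
    unfolding continuous_within by (rule Lim_transform_eventually)
qed

lemma continuous_on_chord_quotient:
  fixes g :: "real \<Rightarrow> complex"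
  assumes per: "\<And>t. g (t + 1) = g t" and der: "\<And>t. (g has_vector_derivative g' t) (at t)"
  shows "continuous_on {0..1/2} (chord_quotient g g' b)"
  unfolding continuous_on_eq_continuous_within
proof
  fix x :: real assume x: "x \<in> {0..1/2}"
  consider "x = 0" | "x = 1/2" | "0 < x \<and> x < 1/2" using x by force
  then show "continuous (at x within {0..1/2}) (chord_quotient g g' b)"
  proof cases
    case 1
    show ?thesis unfolding 1 using der by (rule continuous_within_chord_quotient_0)
  next
    case 2
    show ?thesis unfolding 2 using per der by (rule continuous_within_chord_quotient_half)
  next
    case 3
    have g: "continuous_on UNIV g"
      using der has_vector_derivative_continuous continuous_at_imp_continuous_on by blast
    have "sin (2 * pi * u) \<noteq> 0" if "u \<in> {0<..<1/2}" for u
      using sin_two_pi_pos[of u] that by simp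
    then have "continuous_on {0<..<1/2} (\<lambda>u. (g (b - u) - g (b + u)) / of_real (sin (2 * pi * u)))"
      by (intro continuous_intros continuous_on_compose_UNIV[OF g]) auto
    then have "continuous_on {0<..<1/2} (chord_quotient g g' b)"
      by (rule continuous_on_eq) (auto simp: chord_quotient_def)
    then have "isCont (chord_quotient g g' b) x" using 3 by (simp add: continuous_on_eq_continuous_at)
    then show ?thesis by (rule continuous_at_imp_continuous_within)
  qed
qed

lemma chord_quotient_nonzero:
  assumes "g' b \<noteq> 0" "g' (b + 1/2) \<noteq> 0" "\<And>u. 0 < u \<Longrightarrow> u < 1/2 \<Longrightarrow> g (b - u) \<noteq> g (b + u)"
    and "u \<in> {0..1/2}"
  shows "chord_quotient g g' b u \<noteq> 0"
  using assms sin_two_pi_pos[of u] by (auto simp: chord_quotient_def)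

lemma chord_quotient_times_sin:
  fixes g :: "real \<Rightarrow> complex"
  assumes per: "\<And>t. g (t + 1) = g t" and u: "u \<in> {0..1/2}"
  shows "g (b - u) - g (b + u) = chord_quotient g g' b u * of_real (sin (2 * pi * u))"
proof -
  consider "u = 0" | "u = 1/2" | "0 < u \<and> u < 1/2" using u by force
  then show ?thesis
  proof cases
    case 2
    have "g (b - 1/2) = g (b + 1/2)" using per[of "b - 1/2"] by (simp add: algebra_simps)
    then show ?thesis unfolding 2 by simp
  next
    case 3
    then show ?thesis using sin_two_pi_pos[of u] by (simp add: chord_quotient_def)
  qed simp
qed

section \<open>An ambient isotopy made of slice-wise affine maps, a shear and a rotation\<close>

definition slice_affine ::
  "(real \<Rightarrow> complex) \<Rightarrow> (real \<Rightarrow> complex) \<Rightarrow> real \<Rightarrow> complex \<times> real \<Rightarrow> complex \<times> real" where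
  "slice_affine L B s = (\<lambda>p. (exp (of_real s * L (snd p)) * fst p + of_real s * B (snd p), snd p))"

definition slice_affine_inv ::
  "(real \<Rightarrow> complex) \<Rightarrow> (real \<Rightarrow> complex) \<Rightarrow> real \<Rightarrow> complex \<times> real \<Rightarrow> complex \<times> real" where
  "slice_affine_inv L B s = (\<lambda>p. ((fst p - of_real s * B (snd p)) * exp (- (of_real s * L (snd p))), snd p))"

definition vertical_shear :: "(real \<Rightarrow> real) \<Rightarrow> real \<Rightarrow> complex \<times> real \<Rightarrow> complex \<times> real" where
  "vertical_shear f s = (\<lambda>p. (fst p, snd p + s * f (Re (fst p))))"

definition quarter_turn :: "real \<Rightarrow> complex \<times> real \<Rightarrow> complex \<times> real" where
  "quarter_turn s = (\<lambda>p.
     (of_real (Re (fst p)) + \<i> * of_real (Im (fst p) * cos (s * (pi / 2)) - snd p * sin (s * (pi / 2))),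
      Im (fst p) * sin (s * (pi / 2)) + snd p * cos (s * (pi / 2))))"

definition unlinking_isotopy ::
  "(real \<Rightarrow> complex) \<Rightarrow> (real \<Rightarrow> complex) \<Rightarrow> (real \<Rightarrow> real) \<Rightarrow> real \<Rightarrow> complex \<times> real \<Rightarrow> complex \<times> real" where
  "unlinking_isotopy L B f s x = quarter_turn s (vertical_shear f s (slice_affine L B s x))"

lemma homeomorphism_slice_affine:
  assumes L: "continuous_on UNIV L" and B: "continuous_on UNIV B"
  shows "homeomorphism UNIV UNIV (slice_affine L B s) (slice_affine_inv L B s)"
proof (rule homeomorphismI)
  have L': "continuous_on UNIV (\<lambda>p::complex \<times> real. L (snd p))"
    and B': "continuous_on UNIV (\<lambda>p::complex \<times> real. B (snd p))"
    by (intro continuous_on_compose_UNIV[OF L] continuous_on_compose_UNIV[OF B] continuous_intros)+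
  show "continuous_on UNIV (slice_affine L B s)" "continuous_on UNIV (slice_affine_inv L B s)"
    unfolding slice_affine_def slice_affine_inv_def by (intro continuous_intros L' B')+
  have e1: "exp a * w * exp (- a) = w" and e2: "exp a * (w * exp (- a)) = w" for a w :: complex
    by (metis exp_minus_inverse mult.commute mult.left_commute mult_1_right)+
  show "slice_affine_inv L B s (slice_affine L B s x) = x" for x
    by (simp add: slice_affine_def slice_affine_inv_def e1)
  show "slice_affine L B s (slice_affine_inv L B s x) = x" for x
    by (simp add: slice_affine_def slice_affine_inv_def e2)
qed auto

lemma homeomorphism_vertical_shear:
  assumes "continuous_on UNIV f"
  shows "homeomorphism UNIV UNIV (vertical_shear f s) (vertical_shear f (- s))"
proof (rule homeomorphismI)
  show "continuous_on UNIV (vertical_shear f s)" for s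
    unfolding vertical_shear_def
    by (intro continuous_intros continuous_on_compose_UNIV[OF assms])
  then show "continuous_on UNIV (vertical_shear f (- s))" .
qed (auto simp: vertical_shear_def)

lemma quarter_turn_inverse: "quarter_turn (- s) (quarter_turn s p) = p"
proof -
  obtain z y where p: "p = (z, y)" by force
  have h: "(sin (s * pi / 2))\<^sup>2 + (cos (s * pi / 2))\<^sup>2 = 1" by simp
  have "(Im z * cos (s * pi / 2) - y * sin (s * pi / 2)) * cos (s * pi / 2) +
        (Im z * sin (s * pi / 2) + y * cos (s * pi / 2)) * sin (s * pi / 2) = Im z"
    and "(Im z * sin (s * pi / 2) + y * cos (s * pi / 2)) * cos (s * pi / 2) -
        (Im z * cos (s * pi / 2) - y * sin (s * pi / 2)) * sin (s * pi / 2) = y"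
    using h by algebra+
  then show ?thesis by (simp add: quarter_turn_def complex_eq_iff p)
qed

lemma homeomorphism_quarter_turn: "homeomorphism UNIV UNIV (quarter_turn s) (quarter_turn (- s))"
proof (rule homeomorphismI)
  show "continuous_on UNIV (quarter_turn s)" for s
    unfolding quarter_turn_def by (intro continuous_intros)
  then show "continuous_on UNIV (quarter_turn (- s))" .
  show "quarter_turn (- s) (quarter_turn s x) = x" for x by (rule quarter_turn_inverse)
  show "quarter_turn s (quarter_turn (- s) x) = x" for x using quarter_turn_inverse[of "- s" x] by simp
qed auto

lemma ambient_isotopic_unlinking_isotopy:
  assumes L: "continuous_on UNIV L" and B: "continuous_on UNIV B" and f: "continuous_on UNIV f"
  shows "ambient_isotopic X (unlinking_isotopy L B f 1 ` X)"
  unfolding ambient_isotopic_def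
proof (intro exI[of _ "unlinking_isotopy L B f"] conjI ballI refl)
  have "continuous_on UNIV (\<lambda>q. unlinking_isotopy L B f (fst q) (snd q))"
    unfolding unlinking_isotopy_def slice_affine_def vertical_shear_def quarter_turn_def
    by (intro continuous_intros continuous_on_compose_UNIV[OF L] continuous_on_compose_UNIV[OF B]
        continuous_on_compose_UNIV[OF f])
  then show "continuous_on ({0..1} \<times> UNIV) (\<lambda>(s, x). unlinking_isotopy L B f s x)"
    using continuous_on_subset[OF _ subset_UNIV] by (simp add: case_prod_unfold)
  show "\<exists>g. homeomorphism UNIV UNIV (unlinking_isotopy L B f s) g" for s
  proof
    have "unlinking_isotopy L B f s = quarter_turn s \<circ> (vertical_shear f s \<circ> slice_affine L B s)"
      by (simp add: fun_eq_iff unlinking_isotopy_def)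
    then show "homeomorphism UNIV UNIV (unlinking_isotopy L B f s)
        ((slice_affine_inv L B s \<circ> vertical_shear f (- s)) \<circ> quarter_turn (- s))"
      using homeomorphism_compose[OF homeomorphism_compose[OF homeomorphism_slice_affine[OF L B]
          homeomorphism_vertical_shear[OF f]] homeomorphism_quarter_turn] by simp
  qed
  show "unlinking_isotopy L B f 0 = id"
    by (simp add: fun_eq_iff unlinking_isotopy_def slice_affine_def vertical_shear_def quarter_turn_def
        complex_eq_iff)
qed

definition stacked_height :: "real \<Rightarrow> nat \<Rightarrow> real \<Rightarrow> real" where
  "stacked_height b i t = - 4 * real i + cos (2 * pi * (t - b))"

text \<open>Two parameters \<open>s, t\<close> get the same height \<open>cos (2 pi (_ - b))\<close> iff \<open>s \<equiv> t\<close> or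
  \<open>s + t \<equiv> 2 b\<close> (mod 1). Excluding the latter at crossings separates the strands of every crossing
  and keeps all chords from \<open>c i (b - u)\<close> to \<open>c i (b + u)\<close> nondegenerate.\<close>

definition good_base :: "nat \<Rightarrow> (nat \<Rightarrow> real \<Rightarrow> complex) \<Rightarrow> real \<Rightarrow> bool" where
  "good_base k c b \<longleftrightarrow> 0 < b \<and> b < 1/2 \<and>
     (\<forall>p\<in>dpoints k c. \<forall>i s j t. (i, s) \<in> preim k c p \<and> (j, t) \<in> preim k c p \<longrightarrow> frac (s + t) \<noteq> 2 * b)"

lemma generic_immersionD:
  assumes "generic_immersion k c"
  shows "\<And>i t. i < k \<Longrightarrow> c i (t + 1) = c i t"
    and "\<And>i t. i < k \<Longrightarrow> (c i has_vector_derivative vector_derivative (c i) (at t)) (at t)"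
    and "\<And>i t. i < k \<Longrightarrow> vector_derivative (c i) (at t) \<noteq> 0"
    and "\<And>p. finite (preim k c p)" "\<And>p. card (preim k c p) \<le> 2"
    and "finite (dpoints k c)"
  using assms unfolding generic_immersion_def by (auto simp: vector_derivative_works[symmetric])

lemma continuous_on_component:
  assumes "generic_immersion k c" "i < k"
  shows "continuous_on UNIV (c i)"
  using generic_immersionD(2)[OF assms] has_vector_derivative_continuous
    continuous_at_imp_continuous_on by blast

lemma good_base_exists:
  assumes "generic_immersion k c"
  obtains b where "good_base k c b"
proof -
  define U where "U = \<Union> (preim k c ` dpoints k c)"
  define bad where "bad = (\<lambda>(x, y). frac (snd x + snd y)) ` (U \<times> U)"
  have "finite U" unfolding U_def using generic_immersionD[OF assms] by auto
  then have "finite bad" unfolding bad_def by auto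
  then have "infinite ({0<..<1::real} - bad)"
    using Diff_infinite_finite[of bad] infinite_Ioo[of "0::real" 1] by auto
  then obtain x where x: "x \<in> {0<..<1}" "x \<notin> bad"
    using infinite_imp_nonempty by blast
  have "good_base k c (x / 2)"
    unfolding good_base_def
  proof (intro conjI ballI allI impI)
    fix p i s j t assume "p \<in> dpoints k c" "(i, s) \<in> preim k c p \<and> (j, t) \<in> preim k c p"
    then have "((i, s), (j, t)) \<in> U \<times> U" unfolding U_def by auto
    then have "frac (s + t) \<in> bad" unfolding bad_def by force
    then show "frac (s + t) \<noteq> 2 * (x / 2)" using x by auto
  qed (use x in auto)
  then show thesis by (rule that)
qed

lemma two_preimages_imp_dpoint:
  assumes "generic_immersion k c" "x \<in> preim k c p" "y \<in> preim k c p" "x \<noteq> y"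
  shows "p \<in> dpoints k c"
proof -
  have "card {x, y} \<le> card (preim k c p)"
    using assms generic_immersionD(4)[OF assms(1)] by (intro card_mono) auto
  then show ?thesis
    using assms(4) generic_immersionD(5)[OF assms(1), of p] unfolding dpoints_def by simp
qed

lemma good_base_chord_nondegenerate:
  assumes gi: "generic_immersion k c" and b: "good_base k c b" and i: "i < k"
    and u: "0 < u" "u < 1/2"
  shows "c i (b - u) \<noteq> c i (b + u)"
proof
  assume eq: "c i (b - u) = c i (b + u)"
  define s t where "s = frac (b - u)" and "t = frac (b + u)"
  have per: "c i (x + of_int n) = c i x" for x n
    using periodic_add_of_int[of "c i", OF generic_immersionD(1)[OF gi i]] .
  have "c i s = c i (b - u)" "c i t = c i (b + u)"
    using per[of s "\<lfloor>b - u\<rfloor>"] per[of t "\<lfloor>b + u\<rfloor>"] unfolding s_def t_def frac_def by simp_all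
  then have st: "(i, s) \<in> preim k c (c i (b - u))" "(i, t) \<in> preim k c (c i (b - u))"
    using i eq unfolding preim_def s_def t_def by (simp_all add: frac_lt_1)
  have "s \<noteq> t"
  proof
    assume "s = t"
    then have "2 * u = of_int (\<lfloor>b + u\<rfloor> - \<lfloor>b - u\<rfloor>)" unfolding s_def t_def frac_def by simp
    then obtain m :: int where "2 * u = of_int m" by blast
    with u have "0 < m" "m < 1" by linarith+
    then show False by simp
  qed
  then have "c i (b - u) \<in> dpoints k c" using two_preimages_imp_dpoint[OF gi st] by simp
  then have "frac (s + t) \<noteq> 2 * b" using b st unfolding good_base_def by blast
  moreover have "s + t = 2 * b + of_int (- \<lfloor>b - u\<rfloor> - \<lfloor>b + u\<rfloor>)"
    unfolding s_def t_def frac_def by simp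
  then have "frac (s + t) = frac (2 * b)"
    by (simp only: frac_add_of_int_right)
  then have "frac (s + t) = 2 * b"
    using b by (simp add: frac_eq good_base_def)
  ultimately show False by simp
qed

lemma stacked_height_distinct_at_dpoint:
  assumes b: "good_base k c b" and p: "p \<in> dpoints k c"
    and x: "(i, s) \<in> preim k c p" and y: "(j, t) \<in> preim k c p" and ne: "(i, s) \<noteq> (j, t)"
  shows "stacked_height b i s \<noteq> stacked_height b j t"
proof
  assume eq: "stacked_height b i s = stacked_height b j t"
  show False
  proof (cases "i = j")
    case False
    then have "real i + 1 \<le> real j \<or> real j + 1 \<le> real i" by linarith
    then show False
      using eq cos_le_one[of "2 * pi * (s - b)"] cos_ge_minus_one[of "2 * pi * (s - b)"]
        cos_le_one[of "2 * pi * (t - b)"] cos_ge_minus_one[of "2 * pi * (t - b)"]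
      unfolding stacked_height_def by linarith
  next
    case True
    have "0 \<le> s" "s < 1" "0 \<le> t" "t < 1" using x y unfolding preim_def by auto
    have "cos (2 * pi * (s - b)) = cos (2 * pi * (t - b))"
      using eq True unfolding stacked_height_def by simp
    then consider n :: int where "s - b = t - b + of_int n" | n :: int where "s - b = - (t - b) + of_int n"
      by (rule cos_two_pi_eq_cases)
    then show False
    proof cases
      case (1 n)
      with \<open>0 \<le> s\<close> \<open>s < 1\<close> \<open>0 \<le> t\<close> \<open>t < 1\<close> have "n = 0" by linarith
      then show False using 1 True ne by simp
    next
      case (2 n)
      then have "s + t = 2 * b + of_int n" by simp
      then have "frac (s + t) = frac (2 * b)" by (simp only: frac_add_of_int_right)
      also have "\<dots> = 2 * b" using b by (simp add: frac_eq good_base_def)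
      moreover have "frac (s + t) \<noteq> 2 * b" using b p x y unfolding good_base_def by blast
      ultimately show False by simp
    qed
  qed
qed

lemma admissible_stacked_height:
  assumes "\<And>p x. p \<in> dpoints k c \<Longrightarrow> x \<in> preim k c p \<Longrightarrow> x \<noteq> ov p \<Longrightarrow>
      stacked_height b (fst x) (snd x) < stacked_height b (fst (ov p)) (snd (ov p))"
  shows "admissible_heights k c ov (stacked_height b)"
  unfolding admissible_heights_def
proof (intro conjI allI impI ballI)
  fix i t
  show "continuous_on UNIV (stacked_height b i)"
    unfolding stacked_height_def by (intro continuous_intros)
  have "2 * pi * (t + 1 - b) = 2 * pi * (t - b) + 2 * pi" by (simp add: algebra_simps)
  then show "stacked_height b i (t + 1) = stacked_height b i t"
    unfolding stacked_height_def by simp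
qed (use assms in fastforce)

lemma stacked_over_choice:
  assumes "good_base k c b"
  obtains ov where "\<forall>p \<in> dpoints k c. ov p \<in> preim k c p"
    and "admissible_heights k c ov (stacked_height b)"
proof -
  define h where "h x = stacked_height b (fst x) (snd x)" for x
  have "\<forall>p \<in> dpoints k c. \<exists>y. y \<in> preim k c p \<and> (\<forall>x \<in> preim k c p. x \<noteq> y \<longrightarrow> h x < h y)"
  proof
    fix p assume p: "p \<in> dpoints k c"
    have "card (preim k c p) = 2" using p unfolding dpoints_def by simp
    then obtain x1 x2 where e: "preim k c p = {x1, x2}" "x1 \<noteq> x2" by (meson card_2_iff)
    then have "h x1 \<noteq> h x2"
      unfolding h_def using stacked_height_distinct_at_dpoint[OF assms p, of "fst x1" "snd x1" "fst x2" "snd x2"]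
      by (simp add: prod_eq_iff)
    then consider "h x1 < h x2" | "h x2 < h x1" by (rule linorder_neqE)
    then show "\<exists>y. y \<in> preim k c p \<and> (\<forall>x \<in> preim k c p. x \<noteq> y \<longrightarrow> h x < h y)"
    proof cases
      case 1
      then show ?thesis using e by (intro exI[of _ x2]) auto
    next
      case 2
      then show ?thesis using e by (intro exI[of _ x1]) auto
    qed
  qed
  then obtain ov where ov: "\<forall>p \<in> dpoints k c. ov p \<in> preim k c p \<and> (\<forall>x \<in> preim k c p. x \<noteq> ov p \<longrightarrow> h x < h (ov p))"
    by (rule bchoice[THEN exE])
  then have "\<forall>p \<in> dpoints k c. ov p \<in> preim k c p" by blast
  moreover have "admissible_heights k c ov (stacked_height b)"
    by (rule admissible_stacked_height) (use ov in \<open>auto simp: h_def\<close>)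
  ultimately show thesis by (rule that)
qed

section \<open>Straightening the stacked link slice by slice\<close>

text \<open>The parameter \<open>u \<in> [0, 1/2]\<close> with \<open>cos (2 pi u) = y + 4 i\<close>: at height \<open>y\<close>, the stacked
  component \<open>i\<close> passes through \<open>c i (b - u)\<close> and \<open>c i (b + u)\<close>.\<close>

definition chord_param :: "nat \<Rightarrow> real \<Rightarrow> real" where
  "chord_param i y = arccos (max (- 1) (min 1 (y + 4 * real i))) / (2 * pi)"

text \<open>With \<open>u = chord_param i y\<close>, the map \<open>z \<mapsto> slice_scale c b i y * z + slice_shift c b i y\<close>
  sends \<open>c i (b - u)\<close> and \<open>c i (b + u)\<close> to \<open>3 i + sin (2 pi u)\<close> and \<open>3 i - sin (2 pi u)\<close>.\<close>

definition slice_scale :: "(nat \<Rightarrow> real \<Rightarrow> complex) \<Rightarrow> real \<Rightarrow> nat \<Rightarrow> real \<Rightarrow> complex" where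
  "slice_scale c b i y = 2 / chord_quotient (c i) (\<lambda>t. vector_derivative (c i) (at t)) b (chord_param i y)"

definition slice_shift :: "(nat \<Rightarrow> real \<Rightarrow> complex) \<Rightarrow> real \<Rightarrow> nat \<Rightarrow> real \<Rightarrow> complex" where
  "slice_shift c b i y =
     of_real (3 * real i + sin (2 * pi * chord_param i y)) - slice_scale c b i y * c i (b - chord_param i y)"

definition band_weight :: "nat \<Rightarrow> real \<Rightarrow> real" where
  "band_weight i y = max 0 (min 1 (2 - \<bar>y + 4 * real i\<bar>))"

definition band_glue :: "nat \<Rightarrow> (nat \<Rightarrow> real \<Rightarrow> complex) \<Rightarrow> real \<Rightarrow> complex" where
  "band_glue k F y = (\<Sum>i<k. of_real (band_weight i y) * F i y)"

text \<open>Lifts the circle centred at \<open>3 i\<close> by \<open>4 i\<close>, undoing the stacking.\<close>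

definition band_lift :: "nat \<Rightarrow> real \<Rightarrow> real" where
  "band_lift k x = (\<Sum>i<k. 4 * max 0 (min 1 (x - 3 * real i - 1)))"

lemma chord_param_range: "chord_param i y \<in> {0..1/2}"
proof -
  have "0 \<le> arccos (max (- 1) (min 1 (y + 4 * real i)))" "arccos (max (- 1) (min 1 (y + 4 * real i))) \<le> pi"
    by (auto intro!: arccos_lbound arccos_ubound)
  then show ?thesis unfolding chord_param_def by (auto simp: field_simps)
qed

lemma continuous_on_chord_param: "continuous_on UNIV (chord_param i)"
  unfolding chord_param_def by (intro continuous_intros) auto

lemma cos_chord_param:
  assumes "\<bar>y + 4 * real i\<bar> \<le> 1"
  shows "cos (2 * pi * chord_param i y) = y + 4 * real i"
proof -
  have "max (- 1) (min 1 (y + 4 * real i)) = y + 4 * real i" using assms by auto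
  then show ?thesis using assms unfolding chord_param_def by (simp add: cos_arccos)
qed

lemma slice_scale_continuous_nonzero:
  assumes gi: "generic_immersion k c" and b: "good_base k c b" and i: "i < k"
  shows "continuous_on UNIV (slice_scale c b i)" "slice_scale c b i y \<noteq> 0"
proof -
  let ?E = "chord_quotient (c i) (\<lambda>t. vector_derivative (c i) (at t)) b"
  have nz: "?E u \<noteq> 0" if "u \<in> {0..1/2}" for u
    by (rule chord_quotient_nonzero)
      (use generic_immersionD(3)[OF gi i] good_base_chord_nondegenerate[OF gi b i] that in auto)
  have "continuous_on {0..1/2} ?E"
    by (rule continuous_on_chord_quotient) (use generic_immersionD(1,2)[OF gi i] in auto)
  then have "continuous_on UNIV (\<lambda>y. ?E (chord_param i y))"
    by (rule continuous_on_compose2[OF _ continuous_on_chord_param]) (use chord_param_range in auto)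
  then show "continuous_on UNIV (slice_scale c b i)"
    unfolding slice_scale_def using nz chord_param_range by (intro continuous_intros) auto
  show "slice_scale c b i y \<noteq> 0" unfolding slice_scale_def using nz[OF chord_param_range] by simp
qed

lemma continuous_on_slice_shift:
  assumes gi: "generic_immersion k c" and b: "good_base k c b" and i: "i < k"
  shows "continuous_on UNIV (slice_shift c b i)"
proof -
  have "continuous_on UNIV (\<lambda>y. c i (b - chord_param i y))"
    by (intro continuous_on_compose_UNIV[OF continuous_on_component[OF gi i]] continuous_intros
        continuous_on_chord_param)
  then show ?thesis
    unfolding slice_shift_def
    by (intro continuous_intros continuous_on_chord_param slice_scale_continuous_nonzero(1)[OF gi b i])
qed

text \<open>The logarithm lets the isotopy interpolate the scale factor from 1 as \<open>exp (s L)\<close>.\<close>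

lemma slice_scale_logarithm:
  assumes gi: "generic_immersion k c" and b: "good_base k c b"
  obtains L where "\<And>i. i < k \<Longrightarrow> continuous_on UNIV (L i)"
    and "\<And>i y. i < k \<Longrightarrow> slice_scale c b i y = exp (L i y)"
proof -
  have "\<forall>i \<in> {..<k}. \<exists>L. continuous_on UNIV L \<and> (\<forall>y. slice_scale c b i y = exp (L y))"
  proof
    fix i assume "i \<in> {..<k}"
    then have i: "i < k" by simp
    obtain L where "continuous_on UNIV L" "\<And>y. slice_scale c b i y = exp (L y)"
      using continuous_logarithm_on_contractible[OF slice_scale_continuous_nonzero(1)[OF gi b i]
          contractible_UNIV slice_scale_continuous_nonzero(2)[OF gi b i]] by auto
    then show "\<exists>L. continuous_on UNIV L \<and> (\<forall>y. slice_scale c b i y = exp (L y))" by blast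
  qed
  then obtain L where "\<forall>i \<in> {..<k}. continuous_on UNIV (L i) \<and> (\<forall>y. slice_scale c b i y = exp (L i y))"
    by (rule bchoice[THEN exE])
  then show thesis by (intro that) auto
qed

lemma continuous_on_band_glue:
  assumes "\<And>i. i < k \<Longrightarrow> continuous_on UNIV (F i)"
  shows "continuous_on UNIV (band_glue k F)"
  unfolding band_glue_def band_weight_def using assms by (intro continuous_intros continuous_on_sum) auto

lemma band_glue_in_band:
  assumes "\<bar>y + 4 * real i\<bar> \<le> 1" "i < k"
  shows "band_glue k F y = F i y"
proof -
  have "band_weight j y = 0" if "j \<noteq> i" for j
  proof -
    from that have "real j + 1 \<le> real i \<or> real i + 1 \<le> real j" by linarith
    then have "\<bar>y + 4 * real j\<bar> \<ge> 3" using assms by linarith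
    then show ?thesis unfolding band_weight_def by auto
  qed
  then have "band_glue k F y = (\<Sum>j\<in>{i}. of_real (band_weight j y) * F j y)"
    unfolding band_glue_def using assms by (intro sum.mono_neutral_right) auto
  moreover have "band_weight i y = 1" using assms unfolding band_weight_def by auto
  ultimately show ?thesis by simp
qed

lemma band_lift_near_center:
  assumes "i < k" "3 * real i - 1 \<le> x" "x \<le> 3 * real i + 1"
  shows "band_lift k x = 4 * real i"
proof -
  have "band_lift k x = (\<Sum>j\<in>{..<k}. if j < i then 4 else 0)"
    unfolding band_lift_def
  proof (rule sum.cong)
    fix j assume "j \<in> {..<k}"
    show "4 * max 0 (min 1 (x - 3 * real j - 1)) = (if j < i then 4 else 0)"
    proof (cases "j < i")
      case True
      then have "real j + 1 \<le> real i" by linarith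
      then show ?thesis using True assms by auto
    next
      case False
      then have "real i \<le> real j" by linarith
      then show ?thesis using False assms by auto
    qed
  qed simp
  also have "\<dots> = (\<Sum>j\<in>{j\<in>{..<k}. j < i}. 4)" by (rule sum.inter_filter[symmetric]) simp
  also have "{j\<in>{..<k}. j < i} = {..<i}" using assms by auto
  finally show ?thesis by simp
qed

lemma slice_affine_component_point:
  assumes gi: "generic_immersion k c" and b: "good_base k c b" and i: "i < k"
  shows "slice_scale c b i (stacked_height b i t) * c i t + slice_shift c b i (stacked_height b i t)
    = of_real (3 * real i + sin (2 * pi * (b - t)))"
proof -
  define y where "y = stacked_height b i t"
  define u where "u = chord_param i y"
  have per: "\<And>t. c i (t + 1) = c i t" using generic_immersionD(1)[OF gi i] .
  have "\<bar>y + 4 * real i\<bar> \<le> 1" unfolding y_def stacked_height_def by simp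
  then have "cos (2 * pi * (t - b)) = cos (2 * pi * u)"
    unfolding u_def by (simp add: cos_chord_param y_def stacked_height_def)
  then consider n :: int where "t - b = u + of_int n" | n :: int where "t - b = - u + of_int n"
    by (rule cos_two_pi_eq_cases)
  then show ?thesis
  proof cases
    case (1 n)
    have chord: "c i (b - u) - c i (b + u) = chord_quotient (c i) (\<lambda>t. vector_derivative (c i) (at t)) b u
        * of_real (sin (2 * pi * u))"
      using chord_quotient_times_sin[of "c i", OF per] chord_param_range unfolding u_def by blast
    from 1 have "t = (b + u) + of_int n" by simp
    then have "c i t = c i (b + u)" using periodic_add_of_int[of "c i", OF per] by simp
    moreover from 1 have "b - t = - u + of_int (- n)" by simp
    then have "sin (2 * pi * (b - t)) = - sin (2 * pi * u)"
      using sin_two_pi_add_of_int[of "- u" "- n"] by simp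
    moreover have "slice_scale c b i y * (c i (b - u) - c i (b + u)) = 2 * of_real (sin (2 * pi * u))"
      using chord slice_scale_continuous_nonzero(2)[OF gi b i, of y]
      unfolding slice_scale_def u_def by simp
    ultimately show ?thesis
      unfolding y_def[symmetric] slice_shift_def u_def[symmetric] by (simp add: algebra_simps)
  next
    case (2 n)
    from 2 have "t = (b - u) + of_int n" by simp
    then have "c i t = c i (b - u)" using periodic_add_of_int[of "c i", OF per] by simp
    moreover from 2 have "b - t = u + of_int (- n)" by simp
    then have "sin (2 * pi * (b - t)) = sin (2 * pi * u)"
      using sin_two_pi_add_of_int[of u "- n"] by simp
    ultimately show ?thesis
      unfolding y_def[symmetric] slice_shift_def u_def[symmetric] by simp
  qed
qed

lemma unlinking_isotopy_component_point:
  assumes gi: "generic_immersion k c" and b: "good_base k c b" and i: "i < k"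
    and L: "\<And>j y. j < k \<Longrightarrow> slice_scale c b j y = exp (L j y)"
  shows "unlinking_isotopy (band_glue k L) (band_glue k (slice_shift c b)) (band_lift k) 1
      (c i t, stacked_height b i t) = (of_nat (3 * i) + cis (2 * pi * (b - t) - pi / 2), 0)"
proof -
  define y where "y = stacked_height b i t"
  define \<phi> where "\<phi> = 2 * pi * (b - t)"
  have band: "\<bar>y + 4 * real i\<bar> \<le> 1" unfolding y_def stacked_height_def by simp
  have "\<phi> = - (2 * pi * (t - b))" unfolding \<phi>_def by (simp add: algebra_simps)
  then have y: "y = - 4 * real i + cos \<phi>" unfolding y_def stacked_height_def by simp
  have "slice_affine (band_glue k L) (band_glue k (slice_shift c b)) 1 (c i t, y)
      = (of_real (3 * real i + sin \<phi>), y)"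
    using slice_affine_component_point[OF gi b i, of t, folded y_def \<phi>_def] L[OF i, of y]
    unfolding slice_affine_def by (simp add: band_glue_in_band[OF band i])
  moreover have "band_lift k (3 * real i + sin \<phi>) = 4 * real i"
    using sin_le_one[of \<phi>] sin_ge_minus_one[of \<phi>] by (intro band_lift_near_center[OF i]) linarith+
  ultimately show ?thesis
    unfolding unlinking_isotopy_def y_def[symmetric] \<phi>_def[symmetric]
    by (simp add: y vertical_shear_def quarter_turn_def complex_eq_iff cos_diff sin_diff)
qed

lemma std_unlink_rotated_parametrization:
  "{(of_nat (3 * i) + cis (2 * pi * (b - t) - pi / 2), 0::real) | i t. i < k \<and> 0 \<le> t \<and> t \<le> 1}
    = std_unlink k"
  unfolding std_unlink_def
proof (intro equalityI subsetI; clarify)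
  fix t :: real and j :: nat assume "j < k"
  have "2 * pi * (b - t) - pi / 2 = 2 * pi * (frac (b - t - 1/4) + of_int \<lfloor>b - t - 1/4\<rfloor>)"
    unfolding frac_def by (simp add: algebra_simps)
  then have "cis (2 * pi * (b - t) - pi / 2) = cis (2 * pi * frac (b - t - 1/4))"
    using cis_two_pi_add_of_int by simp
  then show "\<exists>i' s. (of_nat (3 * j) + cis (2 * pi * (b - t) - pi / 2), 0 :: real)
      = (of_nat (3 * i') + cis (2 * pi * s), 0) \<and> i' < k \<and> 0 \<le> s \<and> s \<le> 1"
    using \<open>j < k\<close> frac_ge_0 frac_lt_1 less_imp_le by metis
next
  fix s :: real and j :: nat assume "j < k"
  have "2 * pi * (b - frac (b - 1/4 - s)) - pi / 2 = 2 * pi * (s + of_int \<lfloor>b - 1/4 - s\<rfloor>)"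
    unfolding frac_def by (simp add: algebra_simps)
  then have "cis (2 * pi * s) = cis (2 * pi * (b - frac (b - 1/4 - s)) - pi / 2)"
    using cis_two_pi_add_of_int by simp
  then show "\<exists>i' t. (of_nat (3 * j) + cis (2 * pi * s), 0 :: real)
      = (of_nat (3 * i') + cis (2 * pi * (b - t) - pi / 2), 0) \<and> i' < k \<and> 0 \<le> t \<and> t \<le> 1"
    using \<open>j < k\<close> frac_ge_0 frac_lt_1 less_imp_le by metis
qed

lemma unlinking_isotopy_stacked_link:
  assumes gi: "generic_immersion k c" and b: "good_base k c b"
    and L: "\<And>j y. j < k \<Longrightarrow> slice_scale c b j y = exp (L j y)"
  shows "unlinking_isotopy (band_glue k L) (band_glue k (slice_shift c b)) (band_lift k) 1
      ` space_link k c (stacked_height b) = std_unlink k"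
proof -
  let ?f = "unlinking_isotopy (band_glue k L) (band_glue k (slice_shift c b)) (band_lift k) 1"
  have "?f ` space_link k c (stacked_height b)
      = {(of_nat (3 * i) + cis (2 * pi * (b - t) - pi / 2), 0::real) | i t. i < k \<and> 0 \<le> t \<and> t \<le> 1}"
    unfolding space_link_def
  proof (intro equalityI subsetI)
    fix z assume "z \<in> ?f ` {(c i t, stacked_height b i t) | i t. i < k \<and> 0 \<le> t \<and> t \<le> 1}"
    then show "z \<in> {(of_nat (3 * i) + cis (2 * pi * (b - t) - pi / 2), 0::real) | i t. i < k \<and> 0 \<le> t \<and> t \<le> 1}"
      using unlinking_isotopy_component_point[OF gi b _ L] by blast
  next
    fix z assume "z \<in> {(of_nat (3 * i) + cis (2 * pi * (b - t) - pi / 2), 0::real) | i t. i < k \<and> 0 \<le> t \<and> t \<le> 1}"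
    then obtain i t where z: "z = (of_nat (3 * i) + cis (2 * pi * (b - t) - pi / 2), 0::real)" "i < k" "0 \<le> t" "t \<le> 1"
      by blast
    then have "z = ?f (c i t, stacked_height b i t)"
      using unlinking_isotopy_component_point[OF gi b _ L] by simp
    then show "z \<in> ?f ` {(c i t, stacked_height b i t) | i t. i < k \<and> 0 \<le> t \<and> t \<le> 1}"
      using z by blast
  qed
  also have "\<dots> = std_unlink k" by (rule std_unlink_rotated_parametrization)
  finally show ?thesis .
qed

lemma ambient_isotopic_stacked_link_std_unlink:
  assumes gi: "generic_immersion k c" and b: "good_base k c b"
  shows "ambient_isotopic (space_link k c (stacked_height b)) (std_unlink k)"
proof -
  obtain L where "\<And>i. i < k \<Longrightarrow> continuous_on UNIV (L i)"
    and L: "\<And>i y. i < k \<Longrightarrow> slice_scale c b i y = exp (L i y)"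
    using slice_scale_logarithm[OF gi b] by blast
  from this(1) have "continuous_on UNIV (band_glue k L)" by (rule continuous_on_band_glue)
  moreover have "continuous_on UNIV (band_glue k (slice_shift c b))"
    using continuous_on_slice_shift[OF gi b] by (rule continuous_on_band_glue)
  moreover have "continuous_on UNIV (band_lift k)"
    unfolding band_lift_def by (intro continuous_intros)
  ultimately show ?thesis
    using ambient_isotopic_unlinking_isotopy unlinking_isotopy_stacked_link[OF gi b L] by metis
qed

lemma unlink_diagram_exists:
  assumes gi: "generic_immersion k c"
  obtains ov where "\<forall>p \<in> dpoints k c. ov p \<in> preim k c p" and "unlink_diagram k c ov"
proof -
  obtain b where b: "good_base k c b" using good_base_exists[OF gi] .
  obtain ov where "\<forall>p \<in> dpoints k c. ov p \<in> preim k c p" "admissible_heights k c ov (stacked_height b)"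
    using stacked_over_choice[OF b] .
  then show thesis
    using that ambient_isotopic_stacked_link_std_unlink[OF gi b] unfolding unlink_diagram_def by blast
qed

section \<open>Realizations and crossing changes\<close>

lemma cross_change_other_preim:
  assumes "p \<in> dpoints k c" "ov p \<in> preim k c p" "x \<in> preim k c p" "x \<noteq> ov p" "p \<in> S"
  shows "cross_change k c ov S p = x"
proof -
  have "card (preim k c p) = 2" using assms(1) unfolding dpoints_def by simp
  then obtain y z where "preim k c p = {y, z}" "y \<noteq> z" by (meson card_2_iff)
  then have "preim k c p - {ov p} = {x}" using assms(2-4) by auto
  then show ?thesis using assms(5) unfolding cross_change_def by simp
qed

lemma cross_change_in_preim:
  assumes "\<forall>p \<in> dpoints k c. ov p \<in> preim k c p" "p \<in> dpoints k c"
  shows "cross_change k c ov S p \<in> preim k c p"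
proof (cases "p \<in> S")
  case True
  have "card (preim k c p) = 2" using assms(2) unfolding dpoints_def by simp
  then obtain y z where "preim k c p = {y, z}" "y \<noteq> z" by (meson card_2_iff)
  then obtain x where "x \<in> preim k c p" "x \<noteq> ov p" by blast
  then show ?thesis using cross_change_other_preim[of p k c ov x S] assms True by simp
qed (use assms in \<open>simp add: cross_change_def\<close>)

lemma realization_unknotted_at_classical_exists:
  assumes "virtual_diagram k c cls ov"
  obtains ov' S where "realization k c cls ov ov'" "S \<subseteq> cls"
    "unlink_diagram k c (cross_change k c ov' S)"
proof -
  have gi: "generic_immersion k c" and cls: "cls \<subseteq> dpoints k c"
    and ov: "\<And>p. p \<in> cls \<Longrightarrow> ov p \<in> preim k c p"
    using assms unfolding virtual_diagram_def by auto
  obtain ou where ou: "\<forall>p \<in> dpoints k c. ou p \<in> preim k c p" and "unlink_diagram k c ou"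
    using unlink_diagram_exists[OF gi] .
  define ov' where "ov' p = (if p \<in> cls then ov p else ou p)" for p
  have real: "realization k c cls ov ov'"
    using gi cls ov ou
    unfolding realization_def classical_diagram_def virtual_diagram_def ov'_def by auto
  have "cross_change k c ov' {p \<in> cls. ov p \<noteq> ou p} = ou"
  proof
    fix p show "cross_change k c ov' {p \<in> cls. ov p \<noteq> ou p} p = ou p"
      using cls ov ou cross_change_other_preim[of p k c ov' "ou p"]
      by (cases "p \<in> cls") (auto simp: cross_change_def ov'_def)
  qed
  with \<open>unlink_diagram k c ou\<close> show thesis using that[OF real, of "{p \<in> cls. ov p \<noteq> ou p}"] by simp
qed

lemma realization_absorb_nonclassical_changes:
  assumes "realization k c cls ov ov'"
  shows "realization k c cls ov (cross_change k c ov' (S - cls))"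
    and "cross_change k c (cross_change k c ov' (S - cls)) (S \<inter> cls) = cross_change k c ov' S"
proof -
  have "\<forall>p \<in> dpoints k c. ov' p \<in> preim k c p" "generic_immersion k c"
    using assms unfolding realization_def classical_diagram_def virtual_diagram_def by auto
  then have "\<forall>p \<in> dpoints k c. cross_change k c ov' (S - cls) p \<in> preim k c p"
    using cross_change_in_preim by blast
  then show "realization k c cls ov (cross_change k c ov' (S - cls))"
    using assms \<open>generic_immersion k c\<close>
    unfolding realization_def classical_diagram_def virtual_diagram_def
    by (auto simp: cross_change_def)
  show "cross_change k c (cross_change k c ov' (S - cls)) (S \<inter> cls) = cross_change k c ov' S"
    unfolding cross_change_def by auto
qed

lemma uf_le_card:
  assumes "S \<subseteq> dpoints k c" "unlink_diagram k c (cross_change k c ov S)"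
  shows "uf k c ov \<le> card S"
  unfolding uf_def by (rule Least_le) (use assms in blast)

lemma uf_attained:
  assumes "S \<subseteq> dpoints k c" "unlink_diagram k c (cross_change k c ov S)"
  obtains S' where "S' \<subseteq> dpoints k c" "card S' = uf k c ov" "unlink_diagram k c (cross_change k c ov S')"
  using LeastI_ex[of "\<lambda>m. \<exists>S. S \<subseteq> dpoints k c \<and> card S = m \<and> unlink_diagram k c (cross_change k c ov S)"]
    assms unfolding uf_def by blast

theorem mainTheorem1:
  fixes k :: nat and c :: "nat \<Rightarrow> real \<Rightarrow> complex"
    and cls :: "complex set" and ov :: "complex \<Rightarrow> nat \<times> real"
  assumes "virtual_diagram k c cls ov"
  shows "\<exists>ov'. realization k c cls ov ov' \<and> uf k c ov' \<le> card cls
           \<and> (\<exists>S \<subseteq> cls. card S = uf k c ov' \<and> unlink_diagram k c (cross_change k c ov' S))"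
proof -
  have cls: "cls \<subseteq> dpoints k c" and fin: "finite (dpoints k c)"
    using assms unfolding virtual_diagram_def generic_immersion_def by auto
  define R where "R = {ov'. realization k c cls ov ov' \<and>
    (\<exists>S \<subseteq> cls. unlink_diagram k c (cross_change k c ov' S))}"
  obtain ov0 S0 where "realization k c cls ov ov0" "S0 \<subseteq> cls"
    "unlink_diagram k c (cross_change k c ov0 S0)"
    using realization_unknotted_at_classical_exists[OF assms] .
  then have "ov0 \<in> R" unfolding R_def by blast
  then obtain ov1 where "ov1 \<in> R" and min: "\<And>q. q \<in> R \<Longrightarrow> uf k c ov1 \<le> uf k c q"
    using ex_has_least_nat[of "\<lambda>q. q \<in> R" ov0 "uf k c"] by blast
  then obtain S1 where "S1 \<subseteq> cls" "unlink_diagram k c (cross_change k c ov1 S1)"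
    unfolding R_def by blast
  with cls obtain S where S: "S \<subseteq> dpoints k c" "card S = uf k c ov1"
    "unlink_diagram k c (cross_change k c ov1 S)"
    using uf_attained[of S1 k c ov1] by blast
  define ov2 where "ov2 = cross_change k c ov1 (S - cls)"
  have real2: "realization k c cls ov ov2"
    and unknot2: "unlink_diagram k c (cross_change k c ov2 (S \<inter> cls))"
    using realization_absorb_nonclassical_changes[of k c cls ov ov1 S] \<open>ov1 \<in> R\<close> S(3)
    unfolding ov2_def R_def by auto
  then have "ov2 \<in> R" unfolding R_def by blast
  have "uf k c ov2 \<le> card (S \<inter> cls)"
    using S(1) unknot2 by (intro uf_le_card) auto
  moreover have "card (S \<inter> cls) \<le> card S"
    using S(1) fin by (intro card_mono) (auto dest: finite_subset)
  moreover have "card S \<le> uf k c ov2" using S(2) min[OF \<open>ov2 \<in> R\<close>] by simp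
  ultimately have "card (S \<inter> cls) = uf k c ov2" by linarith
  moreover have "card (S \<inter> cls) \<le> card cls"
    using cls fin by (intro card_mono) (auto dest: finite_subset)
  ultimately show ?thesis
    using real2 unknot2 by (intro exI[of _ ov2]) (auto intro!: exI[of _ "S \<inter> cls"])
qed

end
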